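(* Let $k=n$, $\Omega\subset\mathbb{R}^n$ a bounded domain with boundary $\Gamma$, and $\psi=\psi(x,u,p)$ a smooth positive function on $\Omega\times(0,\infty)\times\mathbb{R}^n$. Let $v\in C^2(\Omega)\cap C^0(\overline\Omega)$ be locally convex with $\det(\delta_{kl}+v_kv_l+vv_{kl})=0$ in $\Omega$, $v=0$ on $\Gamma$. Let $\underline u\in C^4(\Omega)\cap C^0(\overline\Omega)$ be strictly locally convex with $\det A[\underline u]\ge\psi(x,\underline u,D\underline u)$ in $\Omega$, $\underline u=0$ on $\Gamma$, and assume the level sets $\Gamma_\epsilon$ are regular boundaries of $\Omega_\epsilon$ for small $\epsilon>0$. For all sufficiently small $\epsilon>0$ let $u^\epsilon\ge\underline u$ be a smooth strictly locally convex solution of $\det A[u^\epsilon]=\psi(x,u^\epsilon,Du^\epsilon)$ in $\Omega_\epsilon$, $u^\epsilon=\epsilon$ on $\Gamma_\epsilon$, and assume the uniform interior $C^1$ bound: for every sufficiently small $\epsilon'>0$ there is $C(\epsilon')$ with $\|u^\epsilon\|_{C^1(\overline{\Omega_{\epsilon'}})}\le C(\epsilon')$ for all $0<\epsilon<\epsilon'/2$. Set $U^\epsilon=(u^\epsilon)^2+|x|^2$, $V=v^2+|x|^2$. Then for every sufficiently small $\epsilon_0>0$, with $r=\mathrm{dist}(\Omega_{\epsilon_0},\Gamma_{\epsilon_0/2})$, there exists $\tau>0$ depending on $\epsilon_0$ but not on $\epsilon$ such that $\inf_{\Omega_{\epsilon_0}}(V-U^\epsilon)\ge\tau r^2$ for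 all $0<\epsilon<\epsilon_0/4$.
   Context: Upper half-space model of $\mathbb{H}^{n+1}$. For positive $u$, $A[u]=(a_{ij})$, $a_{ij}=\frac1w(\delta_{ij}+u\gamma^{ik}u_{kl}\gamma^{lj})$, $w=\sqrt{1+|Du|^2}$, $\gamma^{ik}=\delta_{ik}-\frac{u_iu_k}{w(1+w)}$; its eigenvalues $\kappa[u]$ are the hyperbolic principal curvatures of the graph of $u$. Strictly locally convex: $\kappa[u]\in\Gamma_n$ (all $\kappa_i>0$); locally convex: $\kappa[u]\in\overline{\Gamma_n}$. $\Gamma_\epsilon=\{x\in\Omega:\underline u(x)=\epsilon\}$, $\Omega_\epsilon=\{x\in\Omega:\underline u(x)>\epsilon\}$; regular boundary means $\Gamma_\epsilon$ is an $(n-1)$-dimensional $C^4$ hypersurface with $|D\underline u|>0$ on it. *)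

theory Defs
  imports "HOL-Analysis.Analysis"
begin

definition pderiv_dir :: "('a::euclidean_space \<Rightarrow> real) \<Rightarrow> 'a \<Rightarrow> 'a \<Rightarrow> real" where
  "pderiv_dir f b x = frechet_derivative f (at x) b"

fun Ck_on :: "nat \<Rightarrow> 'a::euclidean_space set \<Rightarrow> ('a \<Rightarrow> real) \<Rightarrow> bool" where
  "Ck_on 0 S f = continuous_on S f"
| "Ck_on (Suc k) S f = (f differentiable_on S \<and> (\<forall>b\<in>Basis. Ck_on k S (pderiv_dir f b)))"

definition smooth_on :: "'a::euclidean_space set \<Rightarrow> ('a \<Rightarrow> real) \<Rightarrow> bool" where
  "smooth_on S f \<longleftrightarrow> (\<forall>k. Ck_on k S f)"

definition pd :: "(real^'n \<Rightarrow> real) \<Rightarrow> 'n \<Rightarrow> real^'n \<Rightarrow> real" where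
  "pd u i x = frechet_derivative u (at x) (axis i 1)"

definition grad :: "(real^'n \<Rightarrow> real) \<Rightarrow> real^'n \<Rightarrow> real^'n" where
  "grad u x = (\<chi> i. pd u i x)"

definition hess :: "(real^'n \<Rightarrow> real) \<Rightarrow> real^'n \<Rightarrow> real^'n^'n" where
  "hess u x = (\<chi> i j. pd (pd u j) i x)"

definition wfun :: "(real^'n \<Rightarrow> real) \<Rightarrow> real^'n \<Rightarrow> real" where
  "wfun u x = sqrt (1 + (norm (grad u x))\<^sup>2)"

definition gammaM :: "(real^'n \<Rightarrow> real) \<Rightarrow> real^'n \<Rightarrow> real^'n^'n" where
  "gammaM u x = (\<chi> i k. (if i = k then 1 else 0)
       - grad u x $ i * grad u x $ k / (wfun u x * (1 + wfun u x)))"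

definition Amat :: "(real^'n \<Rightarrow> real) \<Rightarrow> real^'n \<Rightarrow> real^'n^'n" where
  "Amat u x = (\<chi> i j. (1 / wfun u x) * ((if i = j then 1 else 0)
       + u x * (gammaM u x ** hess u x ** gammaM u x) $ i $ j))"

definition is_eigenvalue :: "real^'n^'n \<Rightarrow> real \<Rightarrow> bool" where
  "is_eigenvalue M l \<longleftrightarrow> (\<exists>y. y \<noteq> 0 \<and> M *v y = l *\<^sub>R y)"

(* kappa[u] in Gamma_n at every point (u positive) *)
definition strictly_locally_convex :: "(real^'n \<Rightarrow> real) \<Rightarrow> (real^'n) set \<Rightarrow> bool" where
  "strictly_locally_convex u S \<longleftrightarrow>
     (\<forall>x\<in>S. u x > 0 \<and> (\<forall>l. is_eigenvalue (Amat u x) l \<longrightarrow> l > 0))"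

(* kappa[u] in the closure of Gamma_n at every point (u positive) *)
definition locally_convex :: "(real^'n \<Rightarrow> real) \<Rightarrow> (real^'n) set \<Rightarrow> bool" where
  "locally_convex u S \<longleftrightarrow>
     (\<forall>x\<in>S. u x > 0 \<and> (\<forall>l. is_eigenvalue (Amat u x) l \<longrightarrow> l \<ge> 0))"

definition GammaL :: "(real^'n) set \<Rightarrow> (real^'n \<Rightarrow> real) \<Rightarrow> real \<Rightarrow> (real^'n) set" where
  "GammaL \<Omega> ub e = {x\<in>\<Omega>. ub x = e}"

definition OmegaL :: "(real^'n) set \<Rightarrow> (real^'n \<Rightarrow> real) \<Rightarrow> real \<Rightarrow> (real^'n) set" where
  "OmegaL \<Omega> ub e = {x\<in>\<Omega>. ub x > e}"

(* Gamma_e is a regular boundary of Omega_e: it is the boundary of Omega_e and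
   |D ub| > 0 on it (with ub of class C^4 this makes Gamma_e an (n-1)-dimensional
   C^4 hypersurface by the implicit function theorem) *)
definition regular_boundary :: "(real^'n) set \<Rightarrow> (real^'n \<Rightarrow> real) \<Rightarrow> real \<Rightarrow> bool" where
  "regular_boundary \<Omega> ub e \<longleftrightarrow>
     frontier (OmegaL \<Omega> ub e) = GammaL \<Omega> ub e \<and>
     (\<forall>x\<in>GammaL \<Omega> ub e. norm (grad ub x) > 0)"

end

theory Submission
  imports Defs
begin

(* With M[u] = I + Du Du^T + u D^2u, the curvature matrix satisfies w A[u] = gamma M[u] gamma.
   At an interior maximum p of f^2 - g^2 - lam |x - a|^2 the second derivatives along lines give
   M[f] <= M[g] + lam I at p.  If det M[g] = 0, a null vector of M[g] pulled back through gamma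
   is a direction in which A[f] is at most lam, while A[f] <= sup |M[g]| + lam everywhere, so
   det A[f](p) <= lam (sup |M[g]| + lam)^(n-1).  For lam = 0 this contradicts strict convexity of
   f, which gives the comparison principle (u^eps)^2 <= v^2.  For lam = tau, small against the
   lower bound of psi on the compact set that the uniform C^1 bound confines its arguments to, the
   maximum over the ball of radius r about x0 must lie on the sphere, where f^2 <= g^2; hence
   v^2 - (u^eps)^2 >= tau r^2 at x0, and |x|^2 cancels in V - U^eps. *)

section \<open>Derivatives along lines\<close>

lemma has_derivative_grad:
  fixes f :: "real^'n \<Rightarrow> real"
  assumes "f differentiable (at x)"
  shows "(f has_derivative (\<lambda>h. grad f x \<bullet> h)) (at x)"
proof -
  let ?D = "frechet_derivative f (at x)"
  have D: "(f has_derivative ?D) (at x)" using assms frechet_derivative_works by blast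
  have "?D h = grad f x \<bullet> h" for h
  proof -
    have "?D h = ?D (\<Sum>i\<in>UNIV. h$i *\<^sub>R axis i 1)"
      using basis_expansion[of h] by (simp add: scalar_mult_eq_scaleR)
    also have "\<dots> = (\<Sum>i\<in>UNIV. h$i * ?D (axis i 1))"
      using has_derivative_linear[OF D] by (simp add: linear_sum linear_scale)
    finally show ?thesis by (simp add: grad_def pd_def inner_vec_def mult.commute)
  qed
  then show ?thesis using D by (metis (no_types, lifting) ext)
qed

lemma has_real_derivative_along_line:
  fixes f :: "real^'n \<Rightarrow> real"
  assumes "f differentiable (at (x + t *\<^sub>R y))"
  shows "((\<lambda>s. f (x + s *\<^sub>R y)) has_real_derivative grad f (x + t *\<^sub>R y) \<bullet> y) (at t)"
proof -
  have "((\<lambda>s. x + s *\<^sub>R y) has_derivative (\<lambda>s. s *\<^sub>R y)) (at t)"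
    by (auto intro!: derivative_eq_intros)
  from has_derivative_compose[OF this has_derivative_grad[OF assms]]
  show ?thesis by (simp add: has_field_derivative_def mult_commute_abs)
qed

definition twice_differentiable_on :: "(real^'n \<Rightarrow> real) \<Rightarrow> (real^'n) set \<Rightarrow> bool" where
  "twice_differentiable_on f S \<longleftrightarrow>
     (\<forall>x\<in>S. f differentiable (at x) \<and> (\<forall>i. pd f i differentiable (at x)))"

lemma twice_differentiable_on_subset:
  "twice_differentiable_on f T \<Longrightarrow> S \<subseteq> T \<Longrightarrow> twice_differentiable_on f S"
  by (auto simp: twice_differentiable_on_def)

lemma hess_quadratic_form:
  "y \<bullet> (hess f x *v y) = (\<Sum>i\<in>UNIV. (grad (pd f i) x \<bullet> y) * y$i)"
proof -
  have "y \<bullet> (hess f x *v y) = (\<Sum>j\<in>UNIV. \<Sum>i\<in>UNIV. pd (pd f i) j x * y$j * y$i)"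
    by (simp add: hess_def inner_vec_def matrix_vector_mult_def sum_distrib_left mult_ac)
  also have "\<dots> = (\<Sum>i\<in>UNIV. \<Sum>j\<in>UNIV. pd (pd f i) j x * y$j * y$i)" by (rule sum.swap)
  finally show ?thesis by (simp add: grad_def inner_vec_def sum_distrib_right)
qed

lemma has_real_derivative_grad_along_line:
  fixes f :: "real^'n \<Rightarrow> real"
  assumes "\<And>i. pd f i differentiable (at (x + t *\<^sub>R y))"
  shows "((\<lambda>s. grad f (x + s *\<^sub>R y) \<bullet> y) has_real_derivative
           y \<bullet> (hess f (x + t *\<^sub>R y) *v y)) (at t)"
proof -
  have "grad f z \<bullet> y = (\<Sum>i\<in>UNIV. pd f i z * y$i)" for z
    by (simp add: grad_def inner_vec_def)
  then show ?thesis
    unfolding hess_quadratic_form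
    by (auto intro!: DERIV_sum DERIV_cmult_right has_real_derivative_along_line assms)
qed

lemma second_derivative_nonpos_at_local_max:
  fixes G G' :: "real \<Rightarrow> real"
  assumes "0 < \<delta>" and G': "\<And>s. \<bar>s\<bar> < \<delta> \<Longrightarrow> (G has_real_derivative G' s) (at s)"
    and G'': "(G' has_real_derivative d) (at 0)"
    and max: "\<And>s. \<bar>s\<bar> < \<delta> \<Longrightarrow> G s \<le> G 0"
  shows "d \<le> 0"
proof (rule ccontr)
  assume "\<not> d \<le> 0"
  then have "0 < d" by simp
  have G'0: "G' 0 = 0"
    by (rule DERIV_local_max[OF G'[of 0] \<open>0 < \<delta>\<close>]) (use assms in auto)
  obtain d1 where d1: "d1 > 0" "\<And>h. h > 0 \<Longrightarrow> h < d1 \<Longrightarrow> G' 0 < G' (0 + h)"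
    using DERIV_pos_inc_right[OF G'' \<open>0 < d\<close>] by blast
  define h where "h = min \<delta> d1 / 2"
  have h: "0 < h" "h < \<delta>" "h < d1" using d1 \<open>0 < \<delta>\<close> by (auto simp: h_def)
  obtain z where z: "0 < z" "z < h" "G h - G 0 = (h - 0) * G' z"
    using MVT2[of 0 h G G'] h G' by force
  have "G' z > 0" using d1(2)[of z] z h G'0 by simp
  then have "h * G' z > 0" using h by simp
  then have "G h > G 0" using z by simp
  with max[of h] h show False by simp
qed

definition outer :: "real^'n \<Rightarrow> real^'n^'n" where
  "outer p = (\<chi> i k. p$i * p$k)"

lemma outer_mult_vec: "outer p *v z = (p \<bullet> z) *\<^sub>R p"
  by (simp add: vec_eq_iff outer_def matrix_vector_mult_def inner_vec_def sum_distrib_left mult_ac)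

definition Mmat :: "(real^'n \<Rightarrow> real) \<Rightarrow> real^'n \<Rightarrow> real^'n^'n" where
  "Mmat u x = (\<chi> k l. (if k = l then 1 else 0) + grad u x $ k * grad u x $ l + u x * hess u x $ k $ l)"

lemma Mmat_quadratic_form:
  "y \<bullet> (Mmat u x *v y) = (norm y)\<^sup>2 + (grad u x \<bullet> y)\<^sup>2 + u x * (y \<bullet> (hess u x *v y))"
proof -
  have "Mmat u x = mat 1 + outer (grad u x) + u x *\<^sub>R hess u x"
    by (simp add: vec_eq_iff Mmat_def mat_def outer_def)
  then show ?thesis
    by (simp add: matrix_vector_mult_add_rdistrib outer_mult_vec inner_add_right
        scaleR_matrix_vector_assoc[symmetric] power2_eq_square inner_commute
        dot_square_norm[of y, unfolded power2_eq_square])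
qed

lemma Mmat_le_at_max:
  fixes f g :: "real^'n \<Rightarrow> real"
  assumes "open S" and f: "twice_differentiable_on f S" and g: "twice_differentiable_on g S"
    and "p \<in> S"
    and max: "\<And>x. x \<in> S \<Longrightarrow> (f x)\<^sup>2 - (g x)\<^sup>2 - lam * (norm (x - a))\<^sup>2
                               \<le> (f p)\<^sup>2 - (g p)\<^sup>2 - lam * (norm (p - a))\<^sup>2"
  shows "y \<bullet> (Mmat f p *v y) \<le> y \<bullet> (Mmat g p *v y) + lam * (norm y)\<^sup>2"
proof -
  obtain e where e: "e > 0" "ball p e \<subseteq> S" using assms open_contains_ball by blast
  define \<delta> where "\<delta> = e / (norm y + 1)"
  have "\<delta> > 0" using e by (simp add: \<delta>_def add_nonneg_pos)
  have line: "p + s *\<^sub>R y \<in> S" if "\<bar>s\<bar> < \<delta>" for s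
  proof -
    have "norm (s *\<^sub>R y) \<le> \<bar>s\<bar> * (norm y + 1)" by (simp add: mult_left_mono)
    also have "\<dots> < e" using that e by (simp add: \<delta>_def pos_less_divide_eq add_nonneg_pos)
    finally show ?thesis using e by (auto simp: dist_norm)
  qed
  note D1 = has_real_derivative_along_line and D2 = has_real_derivative_grad_along_line
  let ?q = "\<lambda>h s. grad h (p + s *\<^sub>R y) \<bullet> y"
  define G where "G s = (f (p + s *\<^sub>R y))\<^sup>2 - (g (p + s *\<^sub>R y))\<^sup>2
       - lam * ((norm (p - a))\<^sup>2 + 2 * s * ((p - a) \<bullet> y) + s\<^sup>2 * (norm y)\<^sup>2)" for s
  define G' where "G' s = 2 * f (p + s *\<^sub>R y) * ?q f s - 2 * g (p + s *\<^sub>R y) * ?q g s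
       - lam * (2 * ((p - a) \<bullet> y) + 2 * s * (norm y)\<^sup>2)" for s
  have "(G has_real_derivative G' s) (at s)" if "\<bar>s\<bar> < \<delta>" for s
    using line[OF that] f g unfolding G_def G'_def twice_differentiable_on_def
    by (auto intro!: derivative_eq_intros D1 simp: algebra_simps power2_eq_square)
  \<comment> \<open>along a line, (f^2)''/2 = (Df y)^2 + f D^2f(y,y), which is the form of M[f] minus |y|^2\<close>
  moreover have "(G' has_real_derivative 2 * (y \<bullet> (Mmat f p *v y) - y \<bullet> (Mmat g p *v y)
                     - lam * (norm y)\<^sup>2)) (at 0)"
    using \<open>p \<in> S\<close> f g unfolding G'_def twice_differentiable_on_def Mmat_quadratic_form
    by (auto intro!: derivative_eq_intros D1[where t = 0, simplified] D2[where t = 0, simplified]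
        simp: algebra_simps power2_eq_square)
  moreover have "G s \<le> G 0" if "\<bar>s\<bar> < \<delta>" for s
  proof -
    have "(norm (p + s *\<^sub>R y - a))\<^sup>2 = (norm (p - a))\<^sup>2 + 2 * s * ((p - a) \<bullet> y) + s\<^sup>2 * (norm y)\<^sup>2"
      unfolding power2_norm_eq_inner
      by (simp add: inner_add_left inner_add_right inner_diff_left inner_diff_right inner_commute
          power2_eq_square algebra_simps)
    then show ?thesis using max[OF line[OF that]] \<open>p \<in> S\<close> by (simp add: G_def)
  qed
  ultimately have "2 * (y \<bullet> (Mmat f p *v y) - y \<bullet> (Mmat g p *v y) - lam * (norm y)\<^sup>2) \<le> 0"
    by (rule second_derivative_nonpos_at_local_max[OF \<open>\<delta> > 0\<close>])
  then show ?thesis by simp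
qed

section \<open>Symmetric matrices\<close>

lemma symmetric_matrix_inner_commute:
  fixes A :: "real^'n^'n"
  assumes "transpose A = A"
  shows "x \<bullet> (A *v y) = (A *v x) \<bullet> y"
  by (metis assms dot_lmul_matrix transpose_matrix_vector)

lemma linear_coeff_eq_0_if_quadratic_nonneg:
  fixes b c :: real
  assumes "\<And>t. 2 * t * b + t\<^sup>2 * c \<ge> 0"
  shows "b = 0"
proof (rule ccontr)
  assume "b \<noteq> 0"
  define k where "k = \<bar>c\<bar> + 1"
  have k: "k > 0" "c \<le> k" by (auto simp: k_def)
  define t where "t = - b / k"
  have "2 * t * b + t\<^sup>2 * c \<le> 2 * t * b + t\<^sup>2 * k"
    using k by (simp add: mult_left_mono)
  also have "\<dots> = - b\<^sup>2 / k" using k by (simp add: t_def power2_eq_square field_simps)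
  also have "\<dots> < 0" using \<open>b \<noteq> 0\<close> k by simp
  finally show False using assms[of t] by simp
qed

lemma rayleigh_minimizer_is_eigenvector:
  fixes A :: "real^'n^'n"
  assumes sym: "transpose A = A" and S: "subspace S" and inv: "\<And>x. x \<in> S \<Longrightarrow> A *v x \<in> S"
    and "x0 \<in> S" "x0 \<noteq> 0"
  shows "\<exists>y\<in>S. norm y = 1 \<and> A *v y = (y \<bullet> (A *v y)) *\<^sub>R y
           \<and> (\<forall>x\<in>S. (y \<bullet> (A *v y)) * (norm x)\<^sup>2 \<le> x \<bullet> (A *v x))"
proof -
  let ?K = "S \<inter> sphere 0 1"
  have "compact ?K" using S by (intro closed_Int_compact closed_subspace) auto
  moreover have "x0 /\<^sub>R norm x0 \<in> ?K" using assms by (simp add: subspace_scale)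
  moreover have "continuous_on ?K (\<lambda>z. z \<bullet> (A *v z))"
    by (intro continuous_intros linear_continuous_on matrix_vector_mul_bounded_linear)
  ultimately obtain y where y: "y \<in> ?K" and ymin: "\<And>z. z \<in> ?K \<Longrightarrow> y \<bullet> (A *v y) \<le> z \<bullet> (A *v z)"
    using continuous_attains_inf[of ?K "\<lambda>z. z \<bullet> (A *v z)"] by blast
  define m where "m = y \<bullet> (A *v y)"
  have "y \<in> S" and "norm y = 1" using y by auto
  have ray: "m * (norm x)\<^sup>2 \<le> x \<bullet> (A *v x)" if "x \<in> S" for x
  proof (cases "x = 0")
    case False
    then have "x /\<^sub>R norm x \<in> ?K" using that S by (simp add: subspace_scale)
    then have "m \<le> (x /\<^sub>R norm x) \<bullet> (A *v (x /\<^sub>R norm x))" using ymin m_def by blast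
    also have "\<dots> = (x \<bullet> (A *v x)) / (norm x)\<^sup>2"
      by (simp add: matrix_vector_mult_scaleR power2_eq_square divide_inverse)
    finally show ?thesis using False by (simp add: field_simps)
  qed simp
  \<comment> \<open>first variation of the Rayleigh quotient along the orthogonal complement of y\<close>
  have orth: "z \<bullet> (A *v y) = 0" if "z \<in> S" "z \<bullet> y = 0" for z
  proof (rule linear_coeff_eq_0_if_quadratic_nonneg)
    fix t
    have "y \<bullet> (A *v z) = z \<bullet> (A *v y)"
      using symmetric_matrix_inner_commute[OF sym, of y z] by (simp add: inner_commute)
    then have "(y + t *\<^sub>R z) \<bullet> (A *v (y + t *\<^sub>R z)) = m + 2 * t * (z \<bullet> (A *v y)) + t\<^sup>2 * (z \<bullet> (A *v z))"
      by (simp add: matrix_vector_right_distrib matrix_vector_mult_scaleR inner_add_left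
          inner_add_right m_def power2_eq_square algebra_simps)
    moreover have "(norm (y + t *\<^sub>R z))\<^sup>2 = 1 + t\<^sup>2 * (norm z)\<^sup>2"
      using that \<open>norm y = 1\<close> unfolding power2_norm_eq_inner
      by (simp add: inner_add_left inner_add_right inner_commute power2_eq_square norm_eq_1)
    moreover have "y + t *\<^sub>R z \<in> S" using \<open>y \<in> S\<close> that S by (simp add: subspace_add subspace_scale)
    ultimately show "2 * t * (z \<bullet> (A *v y)) + t\<^sup>2 * (z \<bullet> (A *v z) - m * (norm z)\<^sup>2) \<ge> 0"
      using ray[of "y + t *\<^sub>R z"] by (simp add: algebra_simps)
  qed
  define w where "w = A *v y - m *\<^sub>R y"
  have "w \<in> S" using inv \<open>y \<in> S\<close> S by (simp add: w_def subspace_diff subspace_scale)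
  have "w \<bullet> y = 0"
    using \<open>norm y = 1\<close> by (simp add: w_def inner_diff_left inner_diff_right m_def inner_commute norm_eq_1)
  then have "w \<bullet> w = 0"
    using orth[OF \<open>w \<in> S\<close>] by (simp add: w_def inner_diff_right)
  then have "A *v y = m *\<^sub>R y" by (simp add: w_def)
  then show ?thesis using \<open>y \<in> S\<close> \<open>norm y = 1\<close> ray m_def by blast
qed

lemma symmetric_matrix_eigenbasis:
  fixes A :: "real^'n^'n"
  assumes sym: "transpose A = A"
  shows "subspace S \<Longrightarrow> (\<forall>x\<in>S. A *v x \<in> S) \<Longrightarrow>
    \<exists>E. finite E \<and> E \<subseteq> S \<and> pairwise orthogonal E \<and> S \<subseteq> span E \<and>
        (\<forall>e\<in>E. norm e = 1 \<and> A *v e = (e \<bullet> (A *v e)) *\<^sub>R e) \<and>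
        (\<forall>x0\<in>S. x0 \<noteq> 0 \<longrightarrow> (\<exists>y\<in>E. \<forall>x\<in>S. (y \<bullet> (A *v y)) * (norm x)\<^sup>2 \<le> x \<bullet> (A *v x)))"
proof (induction "dim S" arbitrary: S rule: less_induct)
  case less
  show ?case
  proof (cases "\<exists>x\<in>S. x \<noteq> 0")
    case False
    then show ?thesis by (intro exI[of _ "{}"]) auto
  next
    case True
    then obtain x0 where "x0 \<in> S" "x0 \<noteq> 0" by blast
    then obtain y where "y \<in> S" and "norm y = 1" and yeig: "A *v y = (y \<bullet> (A *v y)) *\<^sub>R y"
      and ymin: "\<forall>x\<in>S. (y \<bullet> (A *v y)) * (norm x)\<^sup>2 \<le> x \<bullet> (A *v x)"
      using rayleigh_minimizer_is_eigenvector[OF sym less.prems(1)] less.prems(2) by blast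
    define S' where "S' = S \<inter> {x. y \<bullet> x = 0}"
    have "subspace S'" unfolding S'_def
      using less.prems(1) subspace_orthogonal_to_vector[of y]
      by (intro subspace_inter) (auto simp: orthogonal_def)
    have "\<forall>x\<in>S'. A *v x \<in> S'"
    proof
      fix x assume x: "x \<in> S'"
      have "y \<bullet> (A *v x) = (A *v y) \<bullet> x" by (rule symmetric_matrix_inner_commute[OF sym])
      also have "\<dots> = 0" using x by (subst yeig) (simp add: S'_def)
      finally show "A *v x \<in> S'" using x less.prems(2) by (auto simp: S'_def)
    qed
    have "y \<bullet> y = 1" using \<open>norm y = 1\<close> by (simp add: norm_eq_1)
    have "S' \<subset> S" using \<open>y \<in> S\<close> \<open>y \<bullet> y = 1\<close> unfolding S'_def by force
    then have "dim S' < dim S"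
      using \<open>subspace S'\<close> less.prems(1) by (metis dim_psubset span_eq_iff)
    then obtain E where E: "finite E" "E \<subseteq> S'" "pairwise orthogonal E" "S' \<subseteq> span E"
        "\<forall>e\<in>E. norm e = 1 \<and> A *v e = (e \<bullet> (A *v e)) *\<^sub>R e"
      using less.hyps[OF _ \<open>subspace S'\<close> \<open>\<forall>x\<in>S'. A *v x \<in> S'\<close>] by blast
    have "S \<subseteq> span (insert y E)"
    proof
      fix x assume "x \<in> S"
      then have "x - (y \<bullet> x) *\<^sub>R y \<in> S'" using \<open>y \<in> S\<close> less.prems(1) \<open>y \<bullet> y = 1\<close>
        by (auto simp: S'_def subspace_diff subspace_scale inner_diff_right)
      then have "x - (y \<bullet> x) *\<^sub>R y \<in> span (insert y E)" using E(4) span_mono[of E "insert y E"] by auto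
      then have "x - (y \<bullet> x) *\<^sub>R y + (y \<bullet> x) *\<^sub>R y \<in> span (insert y E)"
        by (intro span_add) (simp_all add: span_base span_scale)
      then show "x \<in> span (insert y E)" by simp
    qed
    then show ?thesis
      using E \<open>y \<in> S\<close> \<open>norm y = 1\<close> yeig ymin
      by (intro exI[of _ "insert y E"])
        (auto simp: pairwise_insert orthogonal_def S'_def inner_commute)
  qed
qed

lemma card_orthonormal_spanning:
  fixes E :: "(real^'n) set"
  assumes "span E = UNIV" and "pairwise orthogonal E" and "\<And>e. e \<in> E \<Longrightarrow> norm e = 1"
  shows "card E = CARD('n)"
proof -
  have "0 \<notin> E" using assms(3) by force
  with assms(2) have "independent E" by (rule pairwise_orthogonal_independent)
  then have "card E = dim (span E)" by (simp add: dim_eq_card_independent)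
  then show ?thesis by (simp add: assms(1))
qed

lemma det_eq_prod_eigenvalues:
  fixes A :: "real^'n^'n"
  assumes "finite E" and span: "span E = UNIV" and po: "pairwise orthogonal E"
    and unit: "\<And>e. e \<in> E \<Longrightarrow> norm e = 1"
    and eig: "\<And>e. e \<in> E \<Longrightarrow> A *v e = \<mu> e *\<^sub>R e"
  shows "det A = prod \<mu> E"
proof -
  obtain f where f: "bij_betw f (UNIV::'n set) E"
    using finite_same_card_bij[OF finite_class.finite_UNIV \<open>finite E\<close>]
      card_orthonormal_spanning[OF span po unit] by auto
  have fE: "f j \<in> E" for j using f by (auto simp: bij_betw_def)
  have ip: "f j \<bullet> f k = (if j = k then 1 else 0)" for j k
  proof (cases "j = k")
    case False
    then have "f j \<noteq> f k" using f by (auto simp: bij_betw_def inj_def)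
    then show ?thesis using po fE[of j] fE[of k] False by (auto simp: pairwise_def orthogonal_def)
  qed (use unit[OF fE[of j]] in \<open>simp add: norm_eq_1\<close>)
  define Q :: "real^'n^'n" where "Q = (\<chi> i j. f j $ i)"
  define D :: "real^'n^'n" where "D = (\<chi> i j. if i = j then \<mu> (f j) else 0)"
  have "transpose Q ** Q = mat 1"
    by (simp add: vec_eq_iff matrix_matrix_mult_def transpose_def Q_def mat_def ip[symmetric] inner_vec_def)
  then have "det Q \<noteq> 0" by (metis det_I det_mul mult_zero_right zero_neq_one)
  have "(A ** Q) $ i $ j = (Q ** D) $ i $ j" for i j
  proof -
    have "(A ** Q) $ i $ j = (A *v f j) $ i"
      by (simp add: matrix_matrix_mult_def matrix_vector_mult_def Q_def)
    also have "\<dots> = (Q ** D) $ i $ j"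
      by (simp add: eig[OF fE] matrix_matrix_mult_def Q_def D_def if_distrib cong: if_cong)
    finally show ?thesis .
  qed
  then have "A ** Q = Q ** D" by (simp add: vec_eq_iff)
  then have "det A * det Q = det Q * det D" by (metis det_mul)
  then have "det A = det D" using \<open>det Q \<noteq> 0\<close> by simp
  also have "det D = prod (\<lambda>j. \<mu> (f j)) UNIV"
    by (subst det_diagonal) (auto simp: D_def)
  also have "\<dots> = prod \<mu> E" using prod.reindex_bij_betw[OF f, of \<mu>] by simp
  finally show ?thesis .
qed

lemma quadratic_form_pos_if_eigenvalues_pos:
  fixes A :: "real^'n^'n"
  assumes sym: "transpose A = A" and ev: "\<forall>l. is_eigenvalue A l \<longrightarrow> l > 0" and "z \<noteq> 0"
  shows "z \<bullet> (A *v z) > 0"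
proof -
  obtain y where "norm y = 1" and yeig: "A *v y = (y \<bullet> (A *v y)) *\<^sub>R y"
    and ymin: "\<forall>x. (y \<bullet> (A *v y)) * (norm x)\<^sup>2 \<le> x \<bullet> (A *v x)"
    using rayleigh_minimizer_is_eigenvector[OF sym subspace_UNIV _ _ \<open>z \<noteq> 0\<close>] by blast
  moreover have "y \<noteq> 0" using \<open>norm y = 1\<close> by auto
  ultimately have "is_eigenvalue A (y \<bullet> (A *v y))" unfolding is_eigenvalue_def by blast
  then have "0 < (y \<bullet> (A *v y)) * (norm z)\<^sup>2" using ev \<open>z \<noteq> 0\<close> by simp
  also have "\<dots> \<le> z \<bullet> (A *v z)" using ymin by blast
  finally show ?thesis .
qed

lemma det_le_if_small_direction:
  fixes A :: "real^'n^'n"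
  assumes sym: "transpose A = A" and ev: "\<forall>l. is_eigenvalue A l \<longrightarrow> l > 0"
    and upper: "\<And>z. z \<bullet> (A *v z) \<le> K * (norm z)\<^sup>2"
    and "z0 \<noteq> 0" and small: "z0 \<bullet> (A *v z0) \<le> \<epsilon> * (norm z0)\<^sup>2"
  shows "det A \<le> \<epsilon> * K ^ (CARD('n) - 1)"
proof -
  let ?\<mu> = "\<lambda>e. e \<bullet> (A *v e)"
  obtain E where E: "finite E" "pairwise orthogonal E" "UNIV \<subseteq> span E"
      "\<forall>e\<in>E. norm e = 1 \<and> A *v e = ?\<mu> e *\<^sub>R e"
    and min: "\<forall>x0::real^'n. x0 \<noteq> 0 \<longrightarrow> (\<exists>y\<in>E. \<forall>x. ?\<mu> y * (norm x)\<^sup>2 \<le> ?\<mu> x)"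
    using symmetric_matrix_eigenbasis[OF sym subspace_UNIV] by auto
  then obtain y where "y \<in> E" and ymin: "\<forall>x. ?\<mu> y * (norm x)\<^sup>2 \<le> ?\<mu> x"
    using \<open>z0 \<noteq> 0\<close> by blast
  have "span E = UNIV" using E(3) by auto
  have "card E = CARD('n)"
    using card_orthonormal_spanning[OF \<open>span E = UNIV\<close> E(2)] E(4) by blast
  have pos: "?\<mu> e > 0" if "e \<in> E" for e
  proof -
    have "e \<noteq> 0" using E(4) that by auto
    then have "is_eigenvalue A (?\<mu> e)" using E(4) that unfolding is_eigenvalue_def by blast
    then show ?thesis using ev by blast
  qed
  have "?\<mu> y \<le> \<epsilon>"
  proof -
    have "?\<mu> y * (norm z0)\<^sup>2 \<le> \<epsilon> * (norm z0)\<^sup>2" using ymin small order_trans by blast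
    then show ?thesis using \<open>z0 \<noteq> 0\<close> by simp
  qed
  have le: "?\<mu> e \<le> K" if "e \<in> E" for e
    using upper[of e] E(4) that by simp
  have "det A = prod ?\<mu> E"
    using E(4) by (intro det_eq_prod_eigenvalues[OF E(1) \<open>span E = UNIV\<close> E(2)]) auto
  also have "\<dots> = ?\<mu> y * prod ?\<mu> (E - {y})" using E(1) \<open>y \<in> E\<close> by (simp add: prod.remove)
  also have "\<dots> \<le> \<epsilon> * prod (\<lambda>_. K) (E - {y})"
  proof (rule mult_mono)
    show "prod ?\<mu> (E - {y}) \<le> prod (\<lambda>_. K) (E - {y})"
      using pos le by (intro prod_mono) (auto intro: less_imp_le)
    show "0 \<le> prod ?\<mu> (E - {y})" using pos by (intro prod_nonneg) (auto intro: less_imp_le)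
    show "0 \<le> \<epsilon>" using \<open>?\<mu> y \<le> \<epsilon>\<close> pos[OF \<open>y \<in> E\<close>] by linarith
  qed fact
  also have "\<dots> = \<epsilon> * K ^ (CARD('n) - 1)"
    using E(1) \<open>y \<in> E\<close> \<open>card E = CARD('n)\<close> by (simp add: card_Diff_singleton)
  finally show ?thesis .
qed

section \<open>Symmetry of the Hessian\<close>

lemma grad_inner_axis: "grad f x \<bullet> axis i 1 = pd f i x"
  by (simp add: grad_def inner_axis)

lemma second_difference_mvt:
  fixes f :: "real^'n \<Rightarrow> real"
  assumes f: "twice_differentiable_on f S" and "h > 0"
    and square: "\<And>s t. 0 \<le> s \<Longrightarrow> s \<le> h \<Longrightarrow> 0 \<le> t \<Longrightarrow> t \<le> h \<Longrightarrow>
                   x + s *\<^sub>R axis i 1 + t *\<^sub>R axis j 1 \<in> S"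
  shows "\<exists>\<xi> \<eta>. 0 < \<xi> \<and> \<xi> < h \<and> 0 < \<eta> \<and> \<eta> < h \<and>
     f (x + h *\<^sub>R axis i 1 + h *\<^sub>R axis j 1) - f (x + h *\<^sub>R axis i 1) - f (x + h *\<^sub>R axis j 1) + f x
       = h\<^sup>2 * pd (pd f i) j (x + \<xi> *\<^sub>R axis i 1 + \<eta> *\<^sub>R axis j 1)"
proof -
  let ?a = "axis i 1 :: real^'n" and ?b = "axis j 1 :: real^'n"
  note D = has_real_derivative_along_line[where y = ?a, unfolded grad_inner_axis]
    has_real_derivative_along_line[where y = ?b, unfolded grad_inner_axis]
  define \<phi> where "\<phi> s = f ((x + h *\<^sub>R ?b) + s *\<^sub>R ?a) - f (x + s *\<^sub>R ?a)" for s
  define \<phi>' where "\<phi>' s = pd f i ((x + h *\<^sub>R ?b) + s *\<^sub>R ?a) - pd f i (x + s *\<^sub>R ?a)" for s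
  have "(\<phi> has_real_derivative \<phi>' s) (at s)" if "0 \<le> s" "s \<le> h" for s
  proof -
    have "(x + h *\<^sub>R ?b) + s *\<^sub>R ?a \<in> S" "x + s *\<^sub>R ?a \<in> S"
      using square[of s h] square[of s 0] that \<open>h > 0\<close> by (simp_all add: add_ac)
    then show ?thesis
      unfolding \<phi>_def \<phi>'_def using f by (auto simp: twice_differentiable_on_def intro!: DERIV_diff D)
  qed
  with MVT2[OF \<open>h > 0\<close>, of \<phi> \<phi>'] obtain \<xi> where \<xi>: "0 < \<xi>" "\<xi> < h" "\<phi> h - \<phi> 0 = h * \<phi>' \<xi>"
    by auto
  define \<zeta> where "\<zeta> t = pd f i ((x + \<xi> *\<^sub>R ?a) + t *\<^sub>R ?b)" for t
  define \<zeta>' where "\<zeta>' t = pd (pd f i) j ((x + \<xi> *\<^sub>R ?a) + t *\<^sub>R ?b)" for t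
  have "(\<zeta> has_real_derivative \<zeta>' t) (at t)" if "0 \<le> t" "t \<le> h" for t
  proof -
    have "(x + \<xi> *\<^sub>R ?a) + t *\<^sub>R ?b \<in> S" using square[of \<xi> t] that \<xi> by simp
    then show ?thesis
      unfolding \<zeta>_def \<zeta>'_def using f by (auto simp: twice_differentiable_on_def intro!: D)
  qed
  with MVT2[OF \<open>h > 0\<close>, of \<zeta> \<zeta>'] obtain \<eta> where \<eta>: "0 < \<eta>" "\<eta> < h" "\<zeta> h - \<zeta> 0 = h * \<zeta>' \<eta>"
    by auto
  have "\<phi>' \<xi> = \<zeta> h - \<zeta> 0" by (simp add: \<phi>'_def \<zeta>_def add_ac)
  then have "\<phi> h - \<phi> 0 = h\<^sup>2 * \<zeta>' \<eta>" using \<xi>(3) \<eta>(3) by (simp add: power2_eq_square)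
  then have "f (x + h *\<^sub>R ?a + h *\<^sub>R ?b) - f (x + h *\<^sub>R ?a) - f (x + h *\<^sub>R ?b) + f x
      = h\<^sup>2 * pd (pd f i) j (x + \<xi> *\<^sub>R ?a + \<eta> *\<^sub>R ?b)"
    by (simp add: \<phi>_def \<zeta>'_def add_ac)
  then show ?thesis using \<xi> \<eta> by blast
qed

lemma pd_pd_commute:
  fixes f :: "real^'n \<Rightarrow> real"
  assumes "open S" and "x \<in> S" and f: "twice_differentiable_on f S"
    and cont: "continuous_on S (pd (pd f i) j)" "continuous_on S (pd (pd f j) i)"
  shows "pd (pd f i) j x = pd (pd f j) i x"
proof (rule ccontr)
  let ?d = "\<bar>pd (pd f i) j x - pd (pd f j) i x\<bar>"
  assume "pd (pd f i) j x \<noteq> pd (pd f j) i x"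
  then have "?d / 2 > 0" by simp
  obtain e where e: "e > 0" "ball x e \<subseteq> S" using assms open_contains_ball by blast
  obtain d1 where d1: "d1 > 0" "\<And>y. y \<in> S \<Longrightarrow> dist y x < d1 \<Longrightarrow> \<bar>pd (pd f i) j y - pd (pd f i) j x\<bar> < ?d / 2"
    using cont(1) \<open>x \<in> S\<close> \<open>?d / 2 > 0\<close> unfolding continuous_on_iff dist_real_def by metis
  obtain d2 where d2: "d2 > 0" "\<And>y. y \<in> S \<Longrightarrow> dist y x < d2 \<Longrightarrow> \<bar>pd (pd f j) i y - pd (pd f j) i x\<bar> < ?d / 2"
    using cont(2) \<open>x \<in> S\<close> \<open>?d / 2 > 0\<close> unfolding continuous_on_iff dist_real_def by metis
  define h where "h = min e (min d1 d2) / 3"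
  have h: "h > 0" "2 * h < e" "2 * h < d1" "2 * h < d2" using e d1 d2 by (auto simp: h_def)
  have near: "dist (x + s *\<^sub>R axis k 1 + t *\<^sub>R axis l 1) x \<le> \<bar>s\<bar> + \<bar>t\<bar>" for s t and k l :: 'n
    using norm_triangle_ineq[of "s *\<^sub>R axis k 1" "t *\<^sub>R (axis l 1 :: real^'n)"] by (simp add: dist_norm)
  have square: "x + s *\<^sub>R axis k 1 + t *\<^sub>R axis l 1 \<in> S"
    if "0 \<le> s" "s \<le> h" "0 \<le> t" "t \<le> h" for s t and k l :: 'n
    using near[of s k t l] that h e by (auto simp: dist_commute)
  obtain \<xi> \<eta> where a: "0 < \<xi>" "\<xi> < h" "0 < \<eta>" "\<eta> < h"
    "f (x + h *\<^sub>R axis i 1 + h *\<^sub>R axis j 1) - f (x + h *\<^sub>R axis i 1) - f (x + h *\<^sub>R axis j 1) + f x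
       = h\<^sup>2 * pd (pd f i) j (x + \<xi> *\<^sub>R axis i 1 + \<eta> *\<^sub>R axis j 1)"
    using second_difference_mvt[OF f h(1) square] by blast
  obtain \<xi>' \<eta>' where b: "0 < \<xi>'" "\<xi>' < h" "0 < \<eta>'" "\<eta>' < h"
    "f (x + h *\<^sub>R axis j 1 + h *\<^sub>R axis i 1) - f (x + h *\<^sub>R axis j 1) - f (x + h *\<^sub>R axis i 1) + f x
       = h\<^sup>2 * pd (pd f j) i (x + \<xi>' *\<^sub>R axis j 1 + \<eta>' *\<^sub>R axis i 1)"
    using second_difference_mvt[OF f h(1) square] by blast
  let ?p = "x + \<xi> *\<^sub>R axis i 1 + \<eta> *\<^sub>R axis j 1" and ?q = "x + \<xi>' *\<^sub>R axis j 1 + \<eta>' *\<^sub>R axis i 1"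
  have "f (x + h *\<^sub>R axis j 1 + h *\<^sub>R axis i 1) = f (x + h *\<^sub>R axis i 1 + h *\<^sub>R axis j 1)"
    by (simp add: add_ac)
  then have "h\<^sup>2 * pd (pd f i) j ?p = h\<^sup>2 * pd (pd f j) i ?q" using a(5) b(5) by linarith
  then have "pd (pd f i) j ?p = pd (pd f j) i ?q" using h by simp
  moreover have "?p \<in> S" "?q \<in> S" using square a b by auto
  moreover have "dist ?p x < d1" "dist ?q x < d2"
    using near[of \<xi> i \<eta> j] near[of \<xi>' j \<eta>' i] a b h by auto
  ultimately have "\<bar>pd (pd f i) j ?p - pd (pd f i) j x\<bar> < ?d / 2"
    "\<bar>pd (pd f i) j ?p - pd (pd f j) i x\<bar> < ?d / 2"
    using d1(2)[of ?p] d2(2)[of ?q] by auto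
  then show False by (auto simp: abs_if split: if_splits)
qed

lemma Ck_on_Suc_imp: "Ck_on (Suc k) S f \<Longrightarrow> Ck_on k S f"
proof (induction k arbitrary: f)
  case 0
  then show ?case by (simp add: differentiable_imp_continuous_on)
qed auto

lemma Ck_on_mono: "k \<le> m \<Longrightarrow> Ck_on m S f \<Longrightarrow> Ck_on k S f"
proof (induction m)
  case (Suc m)
  then show ?case using Ck_on_Suc_imp le_Suc_eq by blast
qed simp

lemma pd_eq_pderiv_dir: "pd f i = pderiv_dir f (axis i 1)"
  by (simp add: fun_eq_iff pd_def pderiv_dir_def)

lemma Ck_on_2_imp:
  fixes f :: "real^'n \<Rightarrow> real"
  assumes "open S" and "Ck_on 2 S f"
  shows "twice_differentiable_on f S" and "continuous_on S f" and "continuous_on S (pd f i)"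
    and "continuous_on S (pd (pd f i) j)"
proof -
  have ax: "axis i (1::real) \<in> Basis" for i :: 'n by simp
  have C: "f differentiable_on S"
    "\<And>b. b \<in> Basis \<Longrightarrow> pderiv_dir f b differentiable_on S"
    "\<And>b b'. b \<in> Basis \<Longrightarrow> b' \<in> Basis \<Longrightarrow> continuous_on S (pderiv_dir (pderiv_dir f b) b')"
    using assms(2) by (auto simp: numeral_2_eq_2)
  show "twice_differentiable_on f S"
    using C(1) C(2)[OF ax] \<open>open S\<close>
    by (auto simp: twice_differentiable_on_def pd_eq_pderiv_dir differentiable_on_eq_differentiable_at)
  show "continuous_on S f" using C(1) by (rule differentiable_imp_continuous_on)
  show "continuous_on S (pd f i)"
    using C(2)[OF ax] by (simp add: pd_eq_pderiv_dir differentiable_imp_continuous_on)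
  show "continuous_on S (pd (pd f i) j)" using C(3)[OF ax ax] by (simp add: pd_eq_pderiv_dir)
qed

lemma hess_symmetric:
  assumes "open S" and "Ck_on 2 S f" and "x \<in> S"
  shows "transpose (hess f x) = hess f x"
  using pd_pd_commute[OF assms(1,3) Ck_on_2_imp(1,4)[OF assms(1,2)] Ck_on_2_imp(4)[OF assms(1,2)]]
  by (simp add: vec_eq_iff transpose_def hess_def)

section \<open>The curvature matrix\<close>

lemma wfun_ge_1: "wfun u x \<ge> 1"
  by (simp add: wfun_def)

lemma wfun_nonzero: "wfun u x \<noteq> 0" "1 + wfun u x \<noteq> 0"
  using wfun_ge_1[of u x] by auto

lemma inner_grad_self_wfun: "grad u x \<bullet> grad u x = (wfun u x)\<^sup>2 - 1"
  by (simp add: wfun_def dot_square_norm)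

lemma gammaM_symmetric: "transpose (gammaM u x) = gammaM u x"
  by (simp add: vec_eq_iff gammaM_def transpose_def mult.commute)

lemma gammaM_mult_vec:
  "gammaM u x *v z = z - ((grad u x \<bullet> z) / (wfun u x * (1 + wfun u x))) *\<^sub>R grad u x"
proof -
  have "gammaM u x = mat 1 - (1 / (wfun u x * (1 + wfun u x))) *\<^sub>R outer (grad u x)"
    by (simp add: vec_eq_iff gammaM_def mat_def outer_def)
  then show ?thesis
    by (simp add: matrix_vector_mult_diff_rdistrib scaleR_matrix_vector_assoc[symmetric] outer_mult_vec)
qed

lemma gammaM_isometry:
  "(norm (gammaM u x *v z))\<^sup>2 + (grad u x \<bullet> (gammaM u x *v z))\<^sup>2 = (norm z)\<^sup>2"
proof -
  let ?p = "grad u x" and ?w = "wfun u x"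
  define s where "s = ?p \<bullet> z"
  define c where "c = s / (?w * (1 + ?w))"
  have "- 2 * c * s + c\<^sup>2 * (?p \<bullet> ?p) + (s - c * (?p \<bullet> ?p))\<^sup>2 = 0"
    unfolding c_def inner_grad_self_wfun using wfun_nonzero[of u x]
    by (simp add: divide_simps power2_eq_square) (simp add: algebra_simps)
  moreover have "(norm (z - c *\<^sub>R ?p))\<^sup>2 + (?p \<bullet> (z - c *\<^sub>R ?p))\<^sup>2
      = (norm z)\<^sup>2 - 2 * c * s + c\<^sup>2 * (?p \<bullet> ?p) + (s - c * (?p \<bullet> ?p))\<^sup>2"
    unfolding power2_norm_eq_inner
    by (simp add: inner_diff_left inner_diff_right inner_commute s_def power2_eq_square algebra_simps)
  moreover have "gammaM u x *v z = z - c *\<^sub>R ?p" by (simp add: gammaM_mult_vec s_def c_def)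
  ultimately show ?thesis by simp
qed

lemma gammaM_inverse:
  "gammaM u x *v (y + ((grad u x \<bullet> y) / (1 + wfun u x)) *\<^sub>R grad u x) = y"
proof -
  let ?p = "grad u x" and ?w = "wfun u x"
  define a where "a = (?p \<bullet> y) / (1 + ?w)"
  have "a - (?p \<bullet> y + a * (?p \<bullet> ?p)) / (?w * (1 + ?w)) = 0"
    unfolding a_def inner_grad_self_wfun using wfun_nonzero[of u x]
    by (simp add: divide_simps power2_eq_square) (simp add: algebra_simps)
  moreover have "gammaM u x *v (y + a *\<^sub>R ?p) = y + (a - (?p \<bullet> y + a * (?p \<bullet> ?p)) / (?w * (1 + ?w))) *\<^sub>R ?p"
    by (simp add: gammaM_mult_vec inner_add_right algebra_simps add_divide_distrib)
  ultimately have "gammaM u x *v (y + a *\<^sub>R ?p) = y" by simp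
  then show ?thesis by (simp add: a_def)
qed

lemma norm_gammaM_le: "(norm (gammaM u x *v z))\<^sup>2 \<le> (norm z)\<^sup>2"
  using gammaM_isometry[of u x z] zero_le_power2[of "grad u x \<bullet> (gammaM u x *v z)"] by linarith

lemma Amat_quadratic_form:
  "wfun u x * (z \<bullet> (Amat u x *v z)) = (gammaM u x *v z) \<bullet> (Mmat u x *v (gammaM u x *v z))"
proof -
  let ?g = "gammaM u x" and ?H = "hess u x" and ?w = "wfun u x"
  have "Amat u x = (1 / ?w) *\<^sub>R (mat 1 + u x *\<^sub>R (?g ** ?H ** ?g))"
    by (simp add: vec_eq_iff Amat_def mat_def)
  then have "Amat u x *v z = (1 / ?w) *\<^sub>R (z + u x *\<^sub>R (?g *v (?H *v (?g *v z))))"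
    by (simp add: scaleR_matrix_vector_assoc[symmetric] matrix_vector_mult_add_rdistrib
        matrix_vector_mul_assoc matrix_mul_assoc)
  then have "?w * (z \<bullet> (Amat u x *v z)) = z \<bullet> z + u x * (z \<bullet> (?g *v (?H *v (?g *v z))))"
    using wfun_nonzero(1)[of u x] by (simp add: inner_add_right)
  also have "z \<bullet> (?g *v (?H *v (?g *v z))) = (?g *v z) \<bullet> (?H *v (?g *v z))"
    by (rule symmetric_matrix_inner_commute[OF gammaM_symmetric])
  also have "z \<bullet> z = (norm (?g *v z))\<^sup>2 + (grad u x \<bullet> (?g *v z))\<^sup>2"
    using gammaM_isometry[of u x z] by (simp add: dot_square_norm)
  finally show ?thesis by (simp add: Mmat_quadratic_form)
qed

lemma Amat_symmetric:
  assumes "transpose (hess u x) = hess u x"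
  shows "transpose (Amat u x) = Amat u x"
proof -
  let ?B = "gammaM u x ** hess u x ** gammaM u x"
  have "transpose ?B = ?B"
    by (simp add: matrix_transpose_mul gammaM_symmetric assms matrix_mul_assoc)
  have "?B $ j $ i = transpose ?B $ i $ j" for i j by (simp add: transpose_def)
  then have "?B $ j $ i = ?B $ i $ j" for i j using \<open>transpose ?B = ?B\<close> by simp
  then show ?thesis by (simp add: vec_eq_iff Amat_def transpose_def)
qed

lemma det_eq_0_imp_null_vector:
  fixes M :: "real^'n^'n"
  assumes "det M = 0"
  shows "\<exists>y. y \<noteq> 0 \<and> M *v y = 0"
  using assms det_eq_0_rank[of M] matrix_nonfull_linear_equations_eq[of M] by auto

lemma Amat_small_direction:
  fixes f g :: "real^'n \<Rightarrow> real"
  assumes cmp: "\<And>y. y \<bullet> (Mmat f p *v y) \<le> y \<bullet> (Mmat g p *v y) + lam * (norm y)\<^sup>2"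
    and "det (Mmat g p) = 0" and "lam \<ge> 0"
  shows "\<exists>z. z \<noteq> 0 \<and> z \<bullet> (Amat f p *v z) \<le> lam * (norm z)\<^sup>2"
proof -
  let ?p = "grad f p" and ?w = "wfun f p"
  obtain y where "y \<noteq> 0" and null: "Mmat g p *v y = 0"
    using det_eq_0_imp_null_vector[OF \<open>det (Mmat g p) = 0\<close>] by blast
  \<comment> \<open>pull the null direction of M[g] back through \<gamma>[f]\<close>
  define z where "z = y + ((?p \<bullet> y) / (1 + ?w)) *\<^sub>R ?p"
  have gz: "gammaM f p *v z = y" unfolding z_def by (rule gammaM_inverse)
  then have "z \<noteq> 0" using \<open>y \<noteq> 0\<close> by auto
  have "(norm y)\<^sup>2 \<le> (norm z)\<^sup>2" using norm_gammaM_le[of f p z] gz by simp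
  have "?w * (z \<bullet> (Amat f p *v z)) \<le> lam * (norm y)\<^sup>2"
    using Amat_quadratic_form[of f p z] gz cmp[of y] null by simp
  then have "z \<bullet> (Amat f p *v z) \<le> lam * (norm y)\<^sup>2 / ?w"
    using wfun_ge_1[of f p] by (simp add: field_simps)
  also have "\<dots> \<le> lam * (norm y)\<^sup>2 / 1"
    using wfun_ge_1[of f p] \<open>lam \<ge> 0\<close> by (intro divide_left_mono) auto
  also have "\<dots> = lam * (norm y)\<^sup>2" by simp
  also have "\<dots> \<le> lam * (norm z)\<^sup>2"
    using \<open>(norm y)\<^sup>2 \<le> (norm z)\<^sup>2\<close> \<open>lam \<ge> 0\<close> by (rule mult_left_mono)
  finally show ?thesis using \<open>z \<noteq> 0\<close> by blast
qed

lemma Amat_upper_bound: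
  fixes f g :: "real^'n \<Rightarrow> real"
  assumes cmp: "\<And>y. y \<bullet> (Mmat f p *v y) \<le> y \<bullet> (Mmat g p *v y) + lam * (norm y)\<^sup>2"
    and K: "\<And>y. y \<bullet> (Mmat g p *v y) \<le> K * (norm y)\<^sup>2" and "K + lam \<ge> 0"
  shows "z \<bullet> (Amat f p *v z) \<le> (K + lam) * (norm z)\<^sup>2"
proof (cases "z \<bullet> (Amat f p *v z) \<ge> 0")
  case True
  let ?y = "gammaM f p *v z"
  have "z \<bullet> (Amat f p *v z) \<le> wfun f p * (z \<bullet> (Amat f p *v z))"
    using True wfun_ge_1[of f p] by (simp add: mult_le_cancel_right1)
  also have "\<dots> \<le> (K + lam) * (norm ?y)\<^sup>2"
    using Amat_quadratic_form[of f p z] cmp[of ?y] K[of ?y] unfolding distrib_right by linarith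
  also have "\<dots> \<le> (K + lam) * (norm z)\<^sup>2"
    using norm_gammaM_le \<open>K + lam \<ge> 0\<close> by (rule mult_left_mono)
  finally show ?thesis .
next
  case False
  moreover have "0 \<le> (K + lam) * (norm z)\<^sup>2" using \<open>K + lam \<ge> 0\<close> by simp
  ultimately show ?thesis by linarith
qed

section \<open>Comparison principles\<close>

lemma Amat_pos_definite:
  assumes "open S" "Ck_on 2 S f" "strictly_locally_convex f S" "x \<in> S" "z \<noteq> 0"
  shows "z \<bullet> (Amat f x *v z) > 0"
  using assms by (intro quadratic_form_pos_if_eigenvalues_pos Amat_symmetric hess_symmetric)
    (auto simp: strictly_locally_convex_def)

theorem sq_le_sq_comparison_principle:
  fixes f g :: "real^'n \<Rightarrow> real"
  assumes "open D" "bounded D" and f: "Ck_on 2 D f" and g: "twice_differentiable_on g D"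
    and conv: "strictly_locally_convex f D" and g_eq: "\<forall>x\<in>D. det (Mmat g x) = 0"
    and "continuous_on (closure D) f" "continuous_on (closure D) g"
    and bdry: "\<forall>x\<in>frontier D. (f x)\<^sup>2 \<le> (g x)\<^sup>2"
  shows "\<forall>x\<in>closure D. (f x)\<^sup>2 \<le> (g x)\<^sup>2"
proof (cases "closure D = {}")
  case False
  let ?F = "\<lambda>x. (f x)\<^sup>2 - (g x)\<^sup>2"
  have "compact (closure D)" using \<open>bounded D\<close> by (simp add: compact_closure)
  moreover have "continuous_on (closure D) ?F" using assms by (intro continuous_intros)
  ultimately obtain p where p: "p \<in> closure D" and max: "\<And>x. x \<in> closure D \<Longrightarrow> ?F x \<le> ?F p"
    using continuous_attains_sup[OF _ False] by blast
  have "?F p \<le> 0"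
  proof (rule ccontr)
    assume "\<not> ?F p \<le> 0"
    then have "p \<in> D" using bdry p closure_Un_frontier by fastforce
    have cmp: "y \<bullet> (Mmat f p *v y) \<le> y \<bullet> (Mmat g p *v y) + 0 * (norm y)\<^sup>2" for y
      by (rule Mmat_le_at_max[OF \<open>open D\<close> Ck_on_2_imp(1)[OF \<open>open D\<close> f] g \<open>p \<in> D\<close>, where a = p])
        (use max closure_subset in auto)
    obtain z where "z \<noteq> 0" "z \<bullet> (Amat f p *v z) \<le> 0 * (norm z)\<^sup>2"
      using Amat_small_direction[OF cmp] g_eq \<open>p \<in> D\<close> by auto
    then show False using Amat_pos_definite[OF \<open>open D\<close> f conv \<open>p \<in> D\<close>] by fastforce
  qed
  then show ?thesis using max by force
qed simp

theorem sq_gap_comparison_on_ball: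
  fixes f g :: "real^'n \<Rightarrow> real"
  assumes "open D" and f: "Ck_on 2 D f" and g: "twice_differentiable_on g D"
    and conv: "strictly_locally_convex f D" and g_eq: "\<forall>x\<in>D. det (Mmat g x) = 0"
    and "continuous_on D f" "continuous_on D g"
    and "r \<ge> 0" and ball: "cball x0 r \<subseteq> D"
    and below: "\<forall>x\<in>cball x0 r. (f x)\<^sup>2 \<le> (g x)\<^sup>2"
    and K: "\<forall>x\<in>ball x0 r. \<forall>y. y \<bullet> (Mmat g x *v y) \<le> K * (norm y)\<^sup>2" and "K \<ge> 0"
    and c: "\<forall>x\<in>ball x0 r. c \<le> det (Amat f x)"
    and "\<tau> > 0" and \<tau>c: "\<tau> * (K + \<tau>) ^ (CARD('n) - 1) < c"
  shows "\<tau> * r\<^sup>2 \<le> (g x0)\<^sup>2 - (f x0)\<^sup>2"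
proof -
  let ?F = "\<lambda>x. (f x)\<^sup>2 - (g x)\<^sup>2 - \<tau> * (norm (x - x0))\<^sup>2"
  have "continuous_on (cball x0 r) ?F"
    using continuous_on_subset[OF \<open>continuous_on D f\<close> ball]
      continuous_on_subset[OF \<open>continuous_on D g\<close> ball] by (intro continuous_intros)
  moreover have "cball x0 r \<noteq> {}" using \<open>r \<ge> 0\<close> by simp
  ultimately obtain p where p: "p \<in> cball x0 r" and max: "\<And>x. x \<in> cball x0 r \<Longrightarrow> ?F x \<le> ?F p"
    using continuous_attains_sup[OF compact_cball] by blast
  \<comment> \<open>the maximum of ?F cannot be interior, since there det A[f] would be too small\<close>
  have "?F p \<le> - \<tau> * r\<^sup>2"
  proof (rule ccontr)
    assume interior: "\<not> ?F p \<le> - \<tau> * r\<^sup>2"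
    have "norm (p - x0) \<noteq> r"
    proof
      assume "norm (p - x0) = r"
      then show False using interior below p by auto
    qed
    then have "p \<in> ball x0 r" using p by (auto simp: dist_norm norm_minus_commute)
    then have "p \<in> D" using ball by auto
    have "ball x0 r \<subseteq> D" using ball by auto
    have cmp: "y \<bullet> (Mmat f p *v y) \<le> y \<bullet> (Mmat g p *v y) + \<tau> * (norm y)\<^sup>2" for y
      by (rule Mmat_le_at_max[OF open_ball
            twice_differentiable_on_subset[OF Ck_on_2_imp(1)[OF \<open>open D\<close> f] \<open>ball x0 r \<subseteq> D\<close>]
            twice_differentiable_on_subset[OF g \<open>ball x0 r \<subseteq> D\<close>] \<open>p \<in> ball x0 r\<close>, where a = x0])
        (use max in auto)
    obtain z where "z \<noteq> 0" and small: "z \<bullet> (Amat f p *v z) \<le> \<tau> * (norm z)\<^sup>2"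
      using Amat_small_direction[OF cmp] g_eq \<open>p \<in> D\<close> \<open>\<tau> > 0\<close> by auto
    have upper: "z \<bullet> (Amat f p *v z) \<le> (K + \<tau>) * (norm z)\<^sup>2" for z
      using K \<open>p \<in> ball x0 r\<close> \<open>K \<ge> 0\<close> \<open>\<tau> > 0\<close> by (intro Amat_upper_bound[OF cmp]) auto
    have ev: "\<forall>l. is_eigenvalue (Amat f p) l \<longrightarrow> l > 0"
      using conv \<open>p \<in> D\<close> by (auto simp: strictly_locally_convex_def)
    have "det (Amat f p) \<le> \<tau> * (K + \<tau>) ^ (CARD('n) - 1)"
      by (rule det_le_if_small_direction[OF Amat_symmetric[OF hess_symmetric[OF \<open>open D\<close> f \<open>p \<in> D\<close>]]
            ev upper \<open>z \<noteq> 0\<close> small])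
    then show False using c \<open>p \<in> ball x0 r\<close> \<tau>c by force
  qed
  moreover have "?F x0 \<le> ?F p" using max[of x0] \<open>r \<ge> 0\<close> by simp
  ultimately show ?thesis by simp
qed

section \<open>Level sets and uniform bounds\<close>

lemma open_OmegaL:
  assumes "open \<Omega>" "continuous_on \<Omega> ub"
  shows "open (OmegaL \<Omega> ub e)"
proof -
  have "OmegaL \<Omega> ub e = \<Omega> \<inter> ub -` {e<..}" by (auto simp: OmegaL_def)
  then show ?thesis using continuous_open_preimage[OF assms(2,1), of "{e<..}"] by simp
qed

lemma closure_OmegaL_subset:
  assumes "continuous_on (closure \<Omega>) ub" and "\<forall>x\<in>frontier \<Omega>. ub x = 0" and "h > 0"
  shows "closure (OmegaL \<Omega> ub h) \<subseteq> {x\<in>\<Omega>. h \<le> ub x}"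
proof -
  have "closed (closure \<Omega> \<inter> ub -` {h..})"
    by (rule continuous_closed_preimage[OF assms(1)]) auto
  moreover have "OmegaL \<Omega> ub h \<subseteq> closure \<Omega> \<inter> ub -` {h..}"
    using closure_subset by (auto simp: OmegaL_def)
  ultimately have "closure (OmegaL \<Omega> ub h) \<subseteq> closure \<Omega> \<inter> ub -` {h..}"
    by (rule closure_minimal[rotated])
  then show ?thesis using assms(2,3) closure_Un_frontier by fastforce
qed

lemma cball_setdist_subset_closure:
  fixes U :: "'a::euclidean_space set"
  assumes "open U" and "frontier U \<subseteq> G" and "x0 \<in> A" and "x0 \<in> U"
  shows "ball x0 (setdist A G) \<subseteq> U" and "cball x0 (setdist A G) \<subseteq> closure U"
proof -
  let ?r = "setdist A G"
  have "z \<notin> G" if "z \<in> ball x0 ?r" for z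
    using that setdist_le_dist[OF \<open>x0 \<in> A\<close>] by fastforce
  then have "ball x0 ?r \<subseteq> U \<union> - closure U"
    using assms(2) closure_Un_frontier by fastforce
  moreover have "U \<inter> - closure U \<inter> ball x0 ?r = {}" using closure_subset by auto
  ultimately have "U \<inter> ball x0 ?r = {} \<or> - closure U \<inter> ball x0 ?r = {}"
    by (intro connectedD[OF connected_ball \<open>open U\<close>]) auto
  moreover have "x0 \<in> U \<inter> ball x0 ?r" if "?r > 0" using that \<open>x0 \<in> U\<close> by simp
  ultimately show ball: "ball x0 ?r \<subseteq> U"
    using \<open>ball x0 ?r \<subseteq> U \<union> - closure U\<close> by (cases "?r > 0") (auto simp: not_less ball_empty)
  show "cball x0 ?r \<subseteq> closure U"
  proof (cases "?r > 0")
    case True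
    then show ?thesis using closure_mono[OF ball] by simp
  next
    case False
    then have "?r = 0" using setdist_pos_le[of A G] by linarith
    then show ?thesis using \<open>x0 \<in> U\<close> closure_subset by auto
  qed
qed

lemma quadratic_form_le_sum_abs:
  fixes M :: "real^'n^'n"
  shows "y \<bullet> (M *v y) \<le> (\<Sum>k\<in>UNIV. \<Sum>l\<in>UNIV. \<bar>M$k$l\<bar>) * (norm y)\<^sup>2"
proof -
  have "y \<bullet> (M *v y) = (\<Sum>k\<in>UNIV. \<Sum>l\<in>UNIV. y$k * M$k$l * y$l)"
    by (simp add: inner_vec_def matrix_vector_mult_def sum_distrib_left mult_ac)
  also have "\<dots> \<le> (\<Sum>k\<in>UNIV. \<Sum>l\<in>UNIV. \<bar>M$k$l\<bar> * (norm y)\<^sup>2)"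
  proof (intro sum_mono)
    fix k l
    have "y$k * M$k$l * y$l \<le> \<bar>y$k * M$k$l * y$l\<bar>" by simp
    also have "\<dots> = \<bar>M$k$l\<bar> * (\<bar>y$k\<bar> * \<bar>y$l\<bar>)" by (simp add: abs_mult mult_ac)
    also have "\<dots> \<le> \<bar>M$k$l\<bar> * (norm y * norm y)"
      by (intro mult_left_mono mult_mono component_le_norm_cart) auto
    finally show "y$k * M$k$l * y$l \<le> \<bar>M$k$l\<bar> * (norm y)\<^sup>2" by (simp add: power2_eq_square)
  qed
  also have "\<dots> = (\<Sum>k\<in>UNIV. \<Sum>l\<in>UNIV. \<bar>M$k$l\<bar>) * (norm y)\<^sup>2"
    by (simp add: sum_distrib_right)
  finally show ?thesis .
qed

lemma Mmat_bounded_on_compact: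
  assumes "open S" and "Ck_on 2 S g" and "compact K" and "K \<subseteq> S"
  shows "\<exists>B\<ge>0. \<forall>x\<in>K. \<forall>y. y \<bullet> (Mmat g x *v y) \<le> B * (norm y)\<^sup>2"
proof -
  define b where "b x = (\<Sum>k\<in>UNIV. \<Sum>l\<in>UNIV. \<bar>Mmat g x $ k $ l\<bar>)" for x
  have "continuous_on S b"
    unfolding b_def Mmat_def grad_def hess_def
    using Ck_on_2_imp(2-4)[OF assms(1,2)] by (auto intro!: continuous_intros)
  then have "bounded (b ` K)"
    using assms(3,4)
    by (intro compact_imp_bounded compact_continuous_image) (auto elim: continuous_on_subset)
  then obtain B where B: "\<And>x. x \<in> K \<Longrightarrow> \<bar>b x\<bar> \<le> B" by (auto simp: bounded_iff)
  have "y \<bullet> (Mmat g x *v y) \<le> max B 0 * (norm y)\<^sup>2" if "x \<in> K" for x y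
  proof -
    have "y \<bullet> (Mmat g x *v y) \<le> b x * (norm y)\<^sup>2"
      unfolding b_def by (rule quadratic_form_le_sum_abs)
    also have "\<dots> \<le> max B 0 * (norm y)\<^sup>2" using B[OF that] by (intro mult_right_mono) auto
    finally show ?thesis .
  qed
  then show ?thesis by (intro exI[of _ "max B 0"]) auto
qed

lemma continuous_pos_bounded_below_on_compact:
  fixes \<psi> :: "'a::topological_space \<Rightarrow> real"
  assumes "continuous_on T \<psi>" and "compact K" and "K \<subseteq> T" and "\<forall>t\<in>K. \<psi> t > 0"
  shows "\<exists>c>0. \<forall>t\<in>K. c \<le> \<psi> t"
proof (cases "K = {}")
  case False
  then obtain t where "t \<in> K" "\<forall>s\<in>K. \<psi> t \<le> \<psi> s"
    using continuous_attains_inf[OF assms(2) _ continuous_on_subset[OF assms(1,3)]] by blast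
  then show ?thesis using assms(4) by blast
qed (auto intro: exI[of _ 1])

lemma exists_pos_mult_power_less:
  fixes B c :: real
  assumes "B \<ge> 0" and "c > 0"
  shows "\<exists>\<tau>>0. \<tau> * (B + \<tau>) ^ n < c"
proof -
  define M where "M = (B + 1) ^ n"
  have "M \<ge> 1" using assms by (simp add: M_def one_le_power)
  define \<tau> where "\<tau> = min 1 (c / (2 * M))"
  have "\<tau> > 0" using assms \<open>M \<ge> 1\<close> by (simp add: \<tau>_def)
  have "\<tau> * (B + \<tau>) ^ n \<le> \<tau> * M"
    unfolding M_def using \<open>\<tau> > 0\<close> assms by (intro mult_left_mono power_mono) (auto simp: \<tau>_def)
  also have "\<dots> \<le> c / (2 * M) * M" using \<open>M \<ge> 1\<close> by (intro mult_right_mono) (auto simp: \<tau>_def)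
  also have "\<dots> < c" using \<open>M \<ge> 1\<close> assms by simp
  finally show ?thesis using \<open>\<tau> > 0\<close> by blast
qed

lemma gap_for_solution:
  fixes w v ub :: "real^'n \<Rightarrow> real"
  assumes \<Omega>: "open \<Omega>" "bounded \<Omega>"
    and ub: "continuous_on (closure \<Omega>) ub" "\<forall>x\<in>frontier \<Omega>. ub x = 0"
    and v: "Ck_on 2 \<Omega> v" "continuous_on (closure \<Omega>) v" "\<forall>x\<in>\<Omega>. det (Mmat v x) = 0"
    and ub_le_v: "\<forall>x\<in>closure \<Omega>. (ub x)\<^sup>2 \<le> (v x)\<^sup>2"
    and levels: "0 < e" "e < h" "h \<le> e0" "regular_boundary \<Omega> ub e" "regular_boundary \<Omega> ub h"
    and w: "Ck_on 2 (OmegaL \<Omega> ub e) w" "continuous_on (closure (OmegaL \<Omega> ub e)) w"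
      "strictly_locally_convex w (OmegaL \<Omega> ub e)" "\<forall>x\<in>GammaL \<Omega> ub e. w x = e"
    and K: "\<forall>x\<in>OmegaL \<Omega> ub h. \<forall>y. y \<bullet> (Mmat v x *v y) \<le> K * (norm y)\<^sup>2" "K \<ge> 0"
    and c: "\<forall>x\<in>OmegaL \<Omega> ub h. c \<le> det (Amat w x)"
    and \<tau>: "\<tau> > 0" "\<tau> * (K + \<tau>) ^ (CARD('n) - 1) < c"
    and x0: "x0 \<in> OmegaL \<Omega> ub e0"
  shows "\<tau> * (setdist (OmegaL \<Omega> ub e0) (GammaL \<Omega> ub h))\<^sup>2 \<le> (v x0)\<^sup>2 - (w x0)\<^sup>2"
proof -
  let ?D = "OmegaL \<Omega> ub e" and ?r = "setdist (OmegaL \<Omega> ub e0) (GammaL \<Omega> ub h)"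
  have open_level: "open (OmegaL \<Omega> ub l)" for l
    using open_OmegaL[OF \<Omega>(1) continuous_on_subset[OF ub(1) closure_subset]] .
  have "?D \<subseteq> \<Omega>" by (auto simp: OmegaL_def)
  have v_D: "twice_differentiable_on v ?D"
    using Ck_on_2_imp(1)[OF \<Omega>(1) v(1)] \<open>?D \<subseteq> \<Omega>\<close> by (rule twice_differentiable_on_subset)
  have v_eq_D: "\<forall>x\<in>?D. det (Mmat v x) = 0" using v(3) \<open>?D \<subseteq> \<Omega>\<close> by blast
  have w_le_v: "\<forall>x\<in>closure ?D. (w x)\<^sup>2 \<le> (v x)\<^sup>2"
  proof (rule sq_le_sq_comparison_principle[OF open_level bounded_subset[OF \<Omega>(2) \<open>?D \<subseteq> \<Omega>\<close>]
        w(1) v_D w(3) v_eq_D w(2) continuous_on_subset[OF v(2) closure_mono[OF \<open>?D \<subseteq> \<Omega>\<close>]]])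
    show "\<forall>x\<in>frontier ?D. (w x)\<^sup>2 \<le> (v x)\<^sup>2"
      using levels(4) w(4) ub_le_v closure_subset by (force simp: regular_boundary_def GammaL_def)
  qed
  have "x0 \<in> OmegaL \<Omega> ub h" using x0 levels(3) by (auto simp: OmegaL_def)
  then have ball: "ball x0 ?r \<subseteq> OmegaL \<Omega> ub h" and cball: "cball x0 ?r \<subseteq> closure (OmegaL \<Omega> ub h)"
    using cball_setdist_subset_closure[OF open_level _ x0] levels(5)
    by (auto simp: regular_boundary_def)
  moreover have "closure (OmegaL \<Omega> ub h) \<subseteq> ?D"
    using closure_OmegaL_subset[OF ub, of h] levels(1,2) by (force simp: OmegaL_def)
  ultimately have "cball x0 ?r \<subseteq> ?D" by blast
  show ?thesis
  proof (rule sq_gap_comparison_on_ball[OF open_level w(1) v_D w(3) v_eq_D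
        continuous_on_subset[OF w(2) closure_subset] _ setdist_pos_le \<open>cball x0 ?r \<subseteq> ?D\<close> _ _ K(2) _ \<tau>])
    show "continuous_on ?D v"
      using \<open>?D \<subseteq> \<Omega>\<close> closure_subset by (blast intro: continuous_on_subset[OF v(2)])
    show "\<forall>x\<in>cball x0 ?r. (w x)\<^sup>2 \<le> (v x)\<^sup>2"
      using w_le_v \<open>cball x0 ?r \<subseteq> ?D\<close> closure_subset by blast
    show "\<forall>x\<in>ball x0 ?r. \<forall>y. y \<bullet> (Mmat v x *v y) \<le> K * (norm y)\<^sup>2" using K(1) ball by blast
    show "\<forall>x\<in>ball x0 ?r. c \<le> det (Amat w x)" using c ball by blast
  qed
qed

definition level_solution ::
    "(real^'n) set \<Rightarrow> ((real^'n) \<times> real \<times> (real^'n) \<Rightarrow> real) \<Rightarrow> (real^'n \<Rightarrow> real) \<Rightarrow> real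
     \<Rightarrow> (real^'n \<Rightarrow> real) \<Rightarrow> bool" where
  "level_solution \<Omega> \<psi> ub e w \<longleftrightarrow>
     smooth_on (OmegaL \<Omega> ub e) w
   \<and> continuous_on (closure (OmegaL \<Omega> ub e)) w
   \<and> strictly_locally_convex w (OmegaL \<Omega> ub e)
   \<and> (\<forall>x\<in>OmegaL \<Omega> ub e. w x \<ge> ub x)
   \<and> (\<forall>x\<in>OmegaL \<Omega> ub e. det (Amat w x) = \<psi> (x, w x, grad w x))
   \<and> (\<forall>x\<in>GammaL \<Omega> ub e. w x = e)"

lemma gap_at_level:
  fixes \<Omega> :: "(real^'n) set" and \<psi> :: "(real^'n) \<times> real \<times> (real^'n) \<Rightarrow> real"
    and v ub :: "real^'n \<Rightarrow> real" and u :: "real \<Rightarrow> real^'n \<Rightarrow> real"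
  assumes \<Omega>: "open \<Omega>" "bounded \<Omega>"
    and \<psi>: "continuous_on (\<Omega> \<times> {0<..} \<times> UNIV) \<psi>" "\<forall>x\<in>\<Omega>. \<forall>z>0. \<forall>p. \<psi> (x, z, p) > 0"
    and ub: "continuous_on (closure \<Omega>) ub" "\<forall>x\<in>frontier \<Omega>. ub x = 0"
    and v: "Ck_on 2 \<Omega> v" "continuous_on (closure \<Omega>) v" "\<forall>x\<in>\<Omega>. det (Mmat v x) = 0"
    and ub_le_v: "\<forall>x\<in>closure \<Omega>. (ub x)\<^sup>2 \<le> (v x)\<^sup>2"
    and "e0 > 0" and regular: "\<forall>e. 0 < e \<and> e \<le> e0 / 2 \<longrightarrow> regular_boundary \<Omega> ub e"
    and sol: "\<forall>e. 0 < e \<and> e < e0 / 4 \<longrightarrow> level_solution \<Omega> \<psi> ub e (u e)"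
    and C1: "\<exists>C. \<forall>e. 0 < e \<and> e < e0 / 4 \<longrightarrow>
               (\<forall>x\<in>closure (OmegaL \<Omega> ub (e0 / 2)). \<bar>u e x\<bar> \<le> C \<and> norm (grad (u e) x) \<le> C)"
  shows "\<exists>\<tau>>0. \<forall>e. 0 < e \<and> e < e0 / 4 \<longrightarrow> (\<forall>x\<in>OmegaL \<Omega> ub e0.
           \<tau> * (setdist (OmegaL \<Omega> ub e0) (GammaL \<Omega> ub (e0 / 2)))\<^sup>2 \<le> (v x)\<^sup>2 - (u e x)\<^sup>2)"
proof -
  from C1 obtain C where C: "\<forall>e. 0 < e \<and> e < e0 / 4 \<longrightarrow>
      (\<forall>x\<in>closure (OmegaL \<Omega> ub (e0 / 2)). \<bar>u e x\<bar> \<le> C \<and> norm (grad (u e) x) \<le> C)"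
    by blast
  define h where "h = e0 / 2"
  let ?K = "closure (OmegaL \<Omega> ub h)"
  have "h > 0" using \<open>e0 > 0\<close> by (simp add: h_def)
  have K: "?K \<subseteq> {x\<in>\<Omega>. h \<le> ub x}" using closure_OmegaL_subset[OF ub \<open>h > 0\<close>] .
  then have "compact ?K" using bounded_subset[OF \<Omega>(2)] by (auto simp: compact_eq_bounded_closed)
  obtain B where "B \<ge> 0" and B: "\<forall>x\<in>?K. \<forall>y. y \<bullet> (Mmat v x *v y) \<le> B * (norm y)\<^sup>2"
    using Mmat_bounded_on_compact[OF \<Omega>(1) v(1) \<open>compact ?K\<close>] K by blast
  \<comment> \<open>the C^1 bound confines the arguments of \<psi> to a compact set\<close>
  obtain c where "c > 0" and c: "\<forall>t\<in>?K \<times> {h..C} \<times> cball 0 C. c \<le> \<psi> t"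
    using continuous_pos_bounded_below_on_compact[OF \<psi>(1), of "?K \<times> {h..C} \<times> cball 0 C"]
      \<open>compact ?K\<close> K \<open>h > 0\<close> \<psi>(2) by (force intro: compact_Times)
  obtain \<tau> where \<tau>: "\<tau> > 0" "\<tau> * (B + \<tau>) ^ (CARD('n) - 1) < c"
    using exists_pos_mult_power_less[OF \<open>B \<ge> 0\<close> \<open>c > 0\<close>] by blast
  have "\<tau> * (setdist (OmegaL \<Omega> ub e0) (GammaL \<Omega> ub h))\<^sup>2 \<le> (v x)\<^sup>2 - (u e x)\<^sup>2"
    if e: "0 < e" "e < e0 / 4" and x: "x \<in> OmegaL \<Omega> ub e0" for e x
  proof (rule gap_for_solution[OF \<Omega> ub v ub_le_v \<open>0 < e\<close> _ _ _ _ _ _ _ _ _ \<open>B \<ge> 0\<close> _ \<tau> x])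
    show "e < h" "h \<le> e0" using e \<open>e0 > 0\<close> by (auto simp: h_def)
    show "regular_boundary \<Omega> ub e" "regular_boundary \<Omega> ub h"
      using regular e \<open>e0 > 0\<close> by (auto simp: h_def)
    show "\<forall>x\<in>OmegaL \<Omega> ub h. \<forall>y. y \<bullet> (Mmat v x *v y) \<le> B * (norm y)\<^sup>2"
      using B closure_subset by blast
    show "\<forall>x\<in>OmegaL \<Omega> ub h. c \<le> det (Amat (u e) x)"
    proof
      fix y assume y: "y \<in> OmegaL \<Omega> ub h"
      then have "y \<in> OmegaL \<Omega> ub e" using \<open>e < h\<close> by (auto simp: OmegaL_def)
      then have "h \<le> u e y" "det (Amat (u e) y) = \<psi> (y, u e y, grad (u e) y)"
        using sol e y by (force simp: OmegaL_def level_solution_def)+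
      moreover have "\<bar>u e y\<bar> \<le> C" "norm (grad (u e) y) \<le> C"
        using C e y closure_subset by (auto simp: h_def)
      ultimately show "c \<le> det (Amat (u e) y)" using c y closure_subset by force
    qed
  qed (use sol e in \<open>auto simp: level_solution_def smooth_on_def\<close>)
  then show ?thesis using \<tau>(1) by (auto simp: h_def)
qed

theorem mainTheorem6:
  fixes \<Omega> :: "(real^'n) set"
    and \<psi> :: "(real^'n) \<times> real \<times> (real^'n) \<Rightarrow> real"
    and v ub :: "real^'n \<Rightarrow> real"
    and u :: "real \<Rightarrow> real^'n \<Rightarrow> real"
  assumes dom: "open \<Omega>" "connected \<Omega>" "bounded \<Omega>" "\<Omega> \<noteq> {}"
    and psi_smooth: "smooth_on (\<Omega> \<times> {0<..} \<times> UNIV) \<psi>"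
    and psi_pos: "\<forall>x\<in>\<Omega>. \<forall>z>0. \<forall>p. \<psi> (x, z, p) > 0"
    and v_C2: "Ck_on 2 \<Omega> v" and v_cont: "continuous_on (closure \<Omega>) v"
    and v_conv: "locally_convex v \<Omega>"
    and v_eq: "\<forall>x\<in>\<Omega>. det (\<chi> k l. (if k = l then 1 else 0) + grad v x $ k * grad v x $ l
                                   + v x * hess v x $ k $ l) = 0"
    and v_bdry: "\<forall>x\<in>frontier \<Omega>. v x = 0"
    and ub_C4: "Ck_on 4 \<Omega> ub" and ub_cont: "continuous_on (closure \<Omega>) ub"
    and ub_conv: "strictly_locally_convex ub \<Omega>"
    and ub_sub: "\<forall>x\<in>\<Omega>. det (Amat ub x) \<ge> \<psi> (x, ub x, grad ub x)"
    and ub_bdry: "\<forall>x\<in>frontier \<Omega>. ub x = 0"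
    and regular: "\<exists>e1>0. \<forall>e. 0 < e \<and> e < e1 \<longrightarrow> regular_boundary \<Omega> ub e"
    and sol: "\<exists>e1>0. \<forall>e. 0 < e \<and> e < e1 \<longrightarrow>
               smooth_on (OmegaL \<Omega> ub e) (u e)
             \<and> continuous_on (closure (OmegaL \<Omega> ub e)) (u e)
             \<and> strictly_locally_convex (u e) (OmegaL \<Omega> ub e)
             \<and> (\<forall>x\<in>OmegaL \<Omega> ub e. u e x \<ge> ub x)
             \<and> (\<forall>x\<in>OmegaL \<Omega> ub e. det (Amat (u e) x) = \<psi> (x, u e x, grad (u e) x))
             \<and> (\<forall>x\<in>GammaL \<Omega> ub e. u e x = e)"
    and C1bound: "\<exists>e2>0. \<forall>e'. 0 < e' \<and> e' < e2 \<longrightarrow> (\<exists>C. \<forall>e. 0 < e \<and> e < e' / 2 \<longrightarrow>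
               (\<forall>x\<in>closure (OmegaL \<Omega> ub e'). \<bar>u e x\<bar> \<le> C \<and> norm (grad (u e) x) \<le> C))"
  shows "\<exists>e3>0. \<forall>e0. 0 < e0 \<and> e0 < e3 \<longrightarrow>
           (\<exists>\<tau>>0. \<forall>e. 0 < e \<and> e < e0 / 4 \<longrightarrow>
              (\<forall>x\<in>OmegaL \<Omega> ub e0.
                 (v x)\<^sup>2 + (norm x)\<^sup>2 - ((u e x)\<^sup>2 + (norm x)\<^sup>2)
                   \<ge> \<tau> * (setdist (OmegaL \<Omega> ub e0) (GammaL \<Omega> ub (e0 / 2)))\<^sup>2))"
proof -
  obtain er where "er > 0" and regular_e: "\<forall>e. 0 < e \<and> e < er \<longrightarrow> regular_boundary \<Omega> ub e"
    using regular by blast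
  have "\<exists>e1>0. \<forall>e. 0 < e \<and> e < e1 \<longrightarrow> level_solution \<Omega> \<psi> ub e (u e)"
    using sol unfolding level_solution_def .
  then obtain es where "es > 0" and sol_e: "\<forall>e. 0 < e \<and> e < es \<longrightarrow> level_solution \<Omega> \<psi> ub e (u e)"
    by blast
  obtain ec where "ec > 0" and C1_e: "\<forall>e'. 0 < e' \<and> e' < ec \<longrightarrow> (\<exists>C. \<forall>e. 0 < e \<and> e < e' / 2 \<longrightarrow>
      (\<forall>x\<in>closure (OmegaL \<Omega> ub e'). \<bar>u e x\<bar> \<le> C \<and> norm (grad (u e) x) \<le> C))"
    using C1bound by blast
  have v_eq': "\<forall>x\<in>\<Omega>. det (Mmat v x) = 0" using v_eq by (simp add: Mmat_def)
  have psi_cont: "continuous_on (\<Omega> \<times> {0<..} \<times> UNIV) \<psi>"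
    using psi_smooth unfolding smooth_on_def by (metis Ck_on.simps(1))
  have ub_le_v: "\<forall>x\<in>closure \<Omega>. (ub x)\<^sup>2 \<le> (v x)\<^sup>2"
    using ub_bdry v_bdry Ck_on_mono[OF _ ub_C4, of 2]
    by (intro sq_le_sq_comparison_principle[OF dom(1,3) _ Ck_on_2_imp(1)[OF dom(1) v_C2] ub_conv v_eq'
          ub_cont v_cont]) auto
  have "\<exists>\<tau>>0. \<forall>e. 0 < e \<and> e < e0 / 4 \<longrightarrow> (\<forall>x\<in>OmegaL \<Omega> ub e0.
           \<tau> * (setdist (OmegaL \<Omega> ub e0) (GammaL \<Omega> ub (e0 / 2)))\<^sup>2 \<le> (v x)\<^sup>2 - (u e x)\<^sup>2)"
    if "0 < e0" "e0 < min (min er es) ec" for e0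
    using that regular_e sol_e C1_e[rule_format, of "e0 / 2"]
    by (intro gap_at_level[OF dom(1,3) psi_cont psi_pos ub_cont ub_bdry v_C2 v_cont v_eq' ub_le_v]) auto
  then show ?thesis using \<open>er > 0\<close> \<open>es > 0\<close> \<open>ec > 0\<close>
    by (intro exI[of _ "min (min er es) ec"]) auto
qed

end
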